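(* Let $\Sigma$ be a real symmetric positive semidefinite $n\times n$ matrix, let \[\mathcal S(\Sigma)=\{(\hat\Sigma,\tilde\Sigma)\mid \Sigma=\hat\Sigma+\tilde\Sigma,\ \hat\Sigma\ge0,\ \tilde\Sigma\ge 0,\ \tilde\Sigma\text{ diagonal}\},\] and for $K\in\mathbb R^{n\times n}$ let $L(K,\hat\Sigma,\tilde\Sigma)=\operatorname{trace}(\hat\Sigma-K\hat\Sigma-\hat\Sigma K'+K(\hat\Sigma+\tilde\Sigma)K')$. Then \[\min_{K}\max_{(\hat\Sigma,\tilde\Sigma)\in\mathcal S(\Sigma)}L(K,\hat\Sigma,\tilde\Sigma)=\max_{(\hat\Sigma,\tilde\Sigma)\in\mathcal S(\Sigma)}\min_K L(K,\hat\Sigma,\tilde\Sigma).\]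
   Context: All matrices $\hat\Sigma,\tilde\Sigma$ are real symmetric $n\times n$; $M\ge0$ means positive semidefinite. *)

theory Defs
  imports "HOL-Analysis.Analysis"
begin

definition psd :: "real^'n^'n \<Rightarrow> bool" where
  "psd M \<longleftrightarrow> transpose M = M \<and> (\<forall>x. 0 \<le> x \<bullet> (M *v x))"

definition is_diag :: "real^'n^'n \<Rightarrow> bool" where
  "is_diag M \<longleftrightarrow> (\<forall>i j. i \<noteq> j \<longrightarrow> M $ i $ j = 0)"

definition splits :: "real^'n^'n \<Rightarrow> ((real^'n^'n) \<times> (real^'n^'n)) set" where
  "splits \<Sigma> = {(Sh, St). \<Sigma> = Sh + St \<and> psd Sh \<and> psd St \<and> is_diag St}"

definition lossL :: "real^'n^'n \<Rightarrow> real^'n^'n \<Rightarrow> real^'n^'n \<Rightarrow> real" where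
  "lossL K Sh St = trace (Sh - K ** Sh - Sh ** transpose K + K ** (Sh + St) ** transpose K)"

end

theory Submission
  imports Defs
begin

text \<open>
  For a split \<open>s = (\<Sigma>h, \<Sigma>t)\<close> of \<open>\<Sigma>\<close> the loss is a convex quadratic in \<open>K\<close>. The null space
  of \<open>\<Sigma>\<close> lies in that of \<open>\<Sigma>h\<close>, so \<open>K \<Sigma> = \<Sigma>h\<close> is solvable, and completing the square gives
  \<open>L(K', s) = L(K, s) + tr((K' - K) \<Sigma> (K' - K)')\<close> for any solution \<open>K\<close>, which is therefore optimal.
  The splits form a compact convex set and \<open>\<phi>(s) = min\<^sub>K L(K, s)\<close>, an infimum of continuous
  functions, attains its maximum at some \<open>s\<^sub>0\<close>; let \<open>K\<^sub>0\<close> be optimal for \<open>s\<^sub>0\<close>. Along the segment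
  from \<open>s\<^sub>0\<close> to any split \<open>s\<close>, \<open>\<phi>\<close> is a concave quadratic in the parameter whose linear
  coefficient is \<open>L(K\<^sub>0, s) - L(K\<^sub>0, s\<^sub>0)\<close>. Maximality of \<open>\<phi>(s\<^sub>0)\<close> makes this coefficient
  nonpositive, so \<open>(K\<^sub>0, s\<^sub>0)\<close> is a saddle point, and a saddle point gives min-max = max-min.
\<close>

lemma quadratic_nonneg_imp_linear_coeff_zero:
  fixes a b :: real
  assumes "\<And>t. 0 \<le> 2 * t * a + t\<^sup>2 * b"
  shows "a = 0"
proof (rule ccontr)
  assume "a \<noteq> 0"
  define c where "c = \<bar>b\<bar> + 1"
  have "c > 0" by (simp add: c_def)
  have "0 \<le> c\<^sup>2 * (2 * (- a / c) * a + (- a / c)\<^sup>2 * b)"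
    using assms[of "- a / c"] by simp
  also have "\<dots> = a\<^sup>2 * (b - 2 * c)"
    using \<open>c > 0\<close> by (simp add: power2_eq_square field_simps)
  also have "\<dots> < 0"
    using \<open>a \<noteq> 0\<close> by (intro mult_pos_neg) (auto simp: c_def)
  finally show False by simp
qed

lemma nonpos_if_dominated_by_quadratic:
  fixes l q :: real
  assumes "0 \<le> q" and "\<And>t. 0 < t \<Longrightarrow> t \<le> 1 \<Longrightarrow> t * l \<le> t\<^sup>2 * q"
  shows "l \<le> 0"
proof (rule ccontr)
  assume "\<not> l \<le> 0"
  define t where "t = l / (l + q)"
  have "0 < t" "t \<le> 1" using \<open>\<not> l \<le> 0\<close> \<open>0 \<le> q\<close> by (auto simp: t_def)
  then have "l \<le> t * q" using assms(2)[of t] by (simp add: power2_eq_square)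
  then have "l * (l + q) \<le> l * q" using \<open>\<not> l \<le> 0\<close> \<open>0 \<le> q\<close> by (simp add: t_def field_simps)
  then show False using \<open>\<not> l \<le> 0\<close> by (simp add: algebra_simps mult_le_0_iff)
qed

lemma matrix_diff_ldistrib: "(A::'a::ring_1^'n^'m) ** (B - C) = A ** B - A ** C"
  by (vector matrix_matrix_mult_def sum_subtractf[symmetric] field_simps)

lemma matrix_diff_rdistrib: "((A::'a::ring_1^'n^'m) - B) ** C = A ** C - B ** C"
  by (vector matrix_matrix_mult_def sum_subtractf[symmetric] field_simps)

lemma transpose_add: "transpose ((A::'a::plus^'n^'m) + B) = transpose A + transpose B"
  by (simp add: transpose_def vec_eq_iff)

lemma transpose_diff: "transpose ((A::'a::minus^'n^'m) - B) = transpose A - transpose B"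
  by (simp add: transpose_def vec_eq_iff)

lemma trace_scaleR: "trace (c *\<^sub>R (A::real^'n^'n)) = c * trace A"
  by (simp add: trace_def sum_distrib_left)

lemma trace_mul_diff_scaleR:
  fixes A B C D :: "real^'n^'n"
  shows "trace ((A - t *\<^sub>R B) ** (C - t *\<^sub>R D))
    = trace (A ** C) - t * (trace (A ** D) + trace (B ** C)) + t\<^sup>2 * trace (B ** D)"
proof -
  have "(A - t *\<^sub>R B) ** (C - t *\<^sub>R D)
      = A ** C - t *\<^sub>R (A ** D) - t *\<^sub>R (B ** C) + t\<^sup>2 *\<^sub>R (B ** D)"
    by (simp add: matrix_diff_ldistrib matrix_diff_rdistrib matrix_scalar_ac
        scalar_matrix_assoc[symmetric] power2_eq_square algebra_simps)
  then show ?thesis by (simp only:) (simp add: trace_add trace_sub trace_scaleR algebra_simps)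
qed

lemma trace_transpose: "trace (transpose (A::'a::semiring_1^'n^'n)) = trace A"
  by (simp add: trace_def transpose_def)

lemma trace_mul_transpose_commute:
  "trace ((A::'a::comm_semiring_1^'n^'m) ** transpose B) = trace (B ** transpose A)"
  by (subst trace_transpose[symmetric]) (simp add: matrix_transpose_mul)

lemma trace_quadratic_form:
  "trace ((A::real^'n^'m) ** S ** transpose A) = (\<Sum>i\<in>UNIV. A $ i \<bullet> (S *v A $ i))"
proof -
  have "(A ** S ** transpose A) $ i $ i = A $ i \<bullet> (S *v A $ i)" for i
  proof -
    have "(A ** S ** transpose A) $ i $ i = (\<Sum>k\<in>UNIV. \<Sum>j\<in>UNIV. A $ i $ j * S $ j $ k * A $ i $ k)"
      by (simp add: matrix_matrix_mult_def transpose_def sum_distrib_right)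
    also have "\<dots> = (\<Sum>j\<in>UNIV. \<Sum>k\<in>UNIV. A $ i $ j * (S $ j $ k * A $ i $ k))"
      by (subst sum.swap) (simp add: mult.assoc)
    also have "\<dots> = A $ i \<bullet> (S *v A $ i)"
      by (simp add: inner_vec_def matrix_vector_mult_def sum_distrib_left)
    finally show ?thesis .
  qed
  then show ?thesis by (simp add: trace_def)
qed

lemma symmetric_inner_commute:
  "transpose (A::real^'n^'n) = A \<Longrightarrow> x \<bullet> (A *v y) = y \<bullet> (A *v x)"
  by (metis dot_lmul_matrix inner_commute transpose_matrix_vector)

subsection \<open>Positive semidefinite matrices\<close>

lemma psd_symmetric: "psd A \<Longrightarrow> transpose A = A"
  by (simp add: psd_def)

lemma psd_add: "psd A \<Longrightarrow> psd B \<Longrightarrow> psd (A + B)"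
  by (simp add: psd_def transpose_add matrix_vector_mult_add_rdistrib inner_add_right)

lemma psd_scaleR: "0 \<le> c \<Longrightarrow> psd A \<Longrightarrow> psd (c *\<^sub>R A)"
  by (simp add: psd_def transpose_scalar scaleR_matrix_vector_assoc[symmetric])

lemma psd_diag_nonneg: "psd (A::real^'n^'n) \<Longrightarrow> 0 \<le> A $ i $ i"
proof -
  assume "psd A"
  then have "0 \<le> axis i 1 \<bullet> (A *v axis i 1)" by (simp add: psd_def)
  also have "axis i 1 \<bullet> (A *v axis i 1) = A $ i $ i"
    by (simp add: matrix_vector_mult_basis inner_axis' column_def)
  finally show ?thesis .
qed

lemma psd_quadratic_zero_imp_null:
  assumes "psd A" "x \<bullet> (A *v x) = 0"
  shows "A *v x = 0"
proof -
  have sym: "transpose A = A" using assms(1) by (rule psd_symmetric)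
  define y where "y = A *v x"
  have "0 \<le> 2 * t * (y \<bullet> y) + t\<^sup>2 * (y \<bullet> (A *v y))" for t
  proof -
    have "0 \<le> (x + t *\<^sub>R y) \<bullet> (A *v (x + t *\<^sub>R y))"
      using assms(1) by (simp add: psd_def)
    also have "\<dots> = x \<bullet> (A *v x) + t * (x \<bullet> (A *v y)) + t * (y \<bullet> (A *v x)) + t\<^sup>2 * (y \<bullet> (A *v y))"
      by (simp add: matrix_vector_right_distrib matrix_vector_mult_scaleR inner_add_left inner_add_right)
        (simp add: ring_distribs power2_eq_square)
    also have "\<dots> = 2 * t * (y \<bullet> y) + t\<^sup>2 * (y \<bullet> (A *v y))"
      using assms(2) symmetric_inner_commute[OF sym, of x y] by (simp add: y_def)
    finally show ?thesis .
  qed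
  then have "y \<bullet> y = 0" by (rule quadratic_nonneg_imp_linear_coeff_zero)
  then show ?thesis by (simp add: y_def)
qed

lemma psd_sum_null_imp_null:
  assumes "psd A" "psd B" "(A + B) *v x = 0"
  shows "A *v x = 0" "B *v x = 0"
proof -
  have "0 \<le> x \<bullet> (A *v x)" "0 \<le> x \<bullet> (B *v x)" using assms(1,2) by (auto simp: psd_def)
  moreover have "x \<bullet> (A *v x) + x \<bullet> (B *v x) = 0"
    using assms(3) by (metis inner_add_right inner_zero_right matrix_vector_mult_add_rdistrib)
  ultimately have "x \<bullet> (A *v x) = 0" "x \<bullet> (B *v x) = 0" by linarith+
  then show "A *v x = 0" "B *v x = 0"
    using psd_quadratic_zero_imp_null assms(1,2) by blast+
qed

lemma trace_quadratic_psd_nonneg: "psd S \<Longrightarrow> 0 \<le> trace (A ** S ** transpose A)"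
  unfolding trace_quadratic_form by (auto simp: psd_def intro: sum_nonneg)

subsection \<open>Solving \<open>X S = M\<close> for symmetric \<open>S\<close>\<close>

lemma symmetric_matrix_solvable:
  fixes S :: "real^'n^'n"
  assumes sym: "transpose S = S" and orth: "\<And>v. S *v v = 0 \<Longrightarrow> b \<bullet> v = 0"
  shows "\<exists>x. S *v x = b"
proof -
  have range: "span (range ((*v) S)) = range ((*v) S)"
    using span_linear_image[OF matrix_vector_mul_linear[of S], of UNIV] by simp
  obtain y z where y: "y \<in> range ((*v) S)" and z: "\<And>w. w \<in> range ((*v) S) \<Longrightarrow> orthogonal z w"
    and b: "b = y + z"
    using orthogonal_subspace_decomp_exists[of "range ((*v) S)" b] unfolding range by blast
  have "(S *v z) \<bullet> w = 0" for w
    using z[of "S *v w"] symmetric_inner_commute[OF sym, of z w] by (simp add: orthogonal_def inner_commute)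
  then have "S *v z = 0" by (metis inner_eq_zero_iff)
  then have "b \<bullet> z = 0" by (rule orth)
  moreover have "y \<bullet> z = 0" using z[OF y] by (simp add: orthogonal_def inner_commute)
  ultimately have "z = 0" using b by (simp add: inner_add_left)
  with y b show ?thesis by auto
qed

lemma symmetric_right_factor_exists:
  fixes S M :: "real^'n^'n"
  assumes sym: "transpose S = S" and null: "\<And>v. S *v v = 0 \<Longrightarrow> M *v v = 0"
  shows "\<exists>X. X ** S = M"
proof -
  have sym_entry: "S $ k $ j = S $ j $ k" for j k
    using sym by (metis transpose_def vec_lambda_beta)
  have "\<exists>x. S *v x = M $ r" for r
  proof (rule symmetric_matrix_solvable[OF sym])
    fix v assume "S *v v = 0"
    then have "(M *v v) $ r = 0" using null by simp
    then show "M $ r \<bullet> v = 0" by (simp add: matrix_vector_mult_def inner_vec_def mult.commute)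
  qed
  then obtain f where f: "\<And>r. S *v f r = M $ r" by metis
  have "((\<chi> r. f r) ** S) $ r $ j = M $ r $ j" for r j
  proof -
    have "((\<chi> r. f r) ** S) $ r $ j = (\<Sum>k\<in>UNIV. S $ j $ k * f r $ k)"
      using sym_entry by (simp add: matrix_matrix_mult_def mult.commute)
    also have "\<dots> = M $ r $ j" by (simp add: f[symmetric] matrix_vector_mult_def)
    finally show ?thesis .
  qed
  then show ?thesis by (auto simp: vec_eq_iff)
qed

subsection \<open>The set of splits\<close>

lemma splitsD:
  assumes "s \<in> splits S"
  shows "S = fst s + snd s" "psd (fst s)" "psd (snd s)" "is_diag (snd s)"
  using assms by (auto simp: splits_def)

lemma splitsI: "S = Sh + St \<Longrightarrow> psd Sh \<Longrightarrow> psd St \<Longrightarrow> is_diag St \<Longrightarrow> (Sh, St) \<in> splits S"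
  by (simp add: splits_def)

lemma split_zero_mem: "psd S \<Longrightarrow> (S, 0) \<in> splits S"
  by (simp add: splits_def psd_def is_diag_def transpose_def vec_eq_iff)

lemma convex_splits: "convex (splits (S::real^'n^'n))"
  unfolding convex_def
proof (intro ballI allI impI)
  fix s s' :: "(real^'n^'n) \<times> (real^'n^'n)" and u v :: real
  assume s: "s \<in> splits S" and s': "s' \<in> splits S" and "0 \<le> u" "0 \<le> v" "u + v = 1"
  have "S = (u + v) *\<^sub>R S" using \<open>u + v = 1\<close> by simp
  also have "\<dots> = u *\<^sub>R (fst s + snd s) + v *\<^sub>R (fst s' + snd s')"
    using splitsD(1)[OF s] splitsD(1)[OF s'] by (metis scaleR_left_distrib)
  also have "\<dots> = (u *\<^sub>R fst s + v *\<^sub>R fst s') + (u *\<^sub>R snd s + v *\<^sub>R snd s')"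
    by (simp add: algebra_simps)
  finally have sum: "S = (u *\<^sub>R fst s + v *\<^sub>R fst s') + (u *\<^sub>R snd s + v *\<^sub>R snd s')" .
  have "(u *\<^sub>R fst s + v *\<^sub>R fst s', u *\<^sub>R snd s + v *\<^sub>R snd s') \<in> splits S"
    using splitsD[OF s] splitsD[OF s'] \<open>0 \<le> u\<close> \<open>0 \<le> v\<close>
    by (intro splitsI[OF sum] psd_add psd_scaleR) (auto simp: is_diag_def)
  then show "u *\<^sub>R s + v *\<^sub>R s' \<in> splits S" by (cases s, cases s') simp
qed

lemma closed_psd: "closed {A::real^'n^'n. psd A}"
proof -
  have "{A::real^'n^'n. psd A} = {A. transpose A = A} \<inter> {A. \<forall>x. 0 \<le> x \<bullet> (A *v x)}"
    by (auto simp: psd_def)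
  moreover have "closed {A::real^'n^'n. transpose A = A}"
    unfolding transpose_def by (rule closed_Collect_eq) (intro continuous_intros)+
  moreover have "closed {A::real^'n^'n. \<forall>x. 0 \<le> x \<bullet> (A *v x)}"
    unfolding inner_vec_def matrix_vector_mult_def
    by (intro closed_Collect_all closed_Collect_le continuous_intros)
  ultimately show ?thesis by auto
qed

lemma closed_is_diag: "closed {A::real^'n^'n. is_diag A}"
proof -
  have "{A::real^'n^'n. is_diag A} = (\<Inter>i. \<Inter>j\<in>- {i}. {A. A $ i $ j = 0})"
    by (auto simp: is_diag_def)
  moreover have "closed {A::real^'n^'n. A $ i $ j = 0}" for i j
    by (rule closed_Collect_eq) (intro continuous_intros)+
  ultimately show ?thesis by (simp add: closed_INT)
qed

lemma closed_splits: "closed (splits (S::real^'n^'n))"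
proof -
  have splits_eq: "splits S = {p. S = fst p + snd p} \<inter> fst -` {A. psd A} \<inter> snd -` {A. psd A}
      \<inter> snd -` {A. is_diag A}"
    by (auto simp: splits_def)
  have "closed {p. S = fst p + (snd p :: real^'n^'n)}"
    by (rule closed_Collect_eq) (intro continuous_intros)+
  then show ?thesis
    unfolding splits_eq
    by (intro closed_Int closed_vimage_fst closed_vimage_snd closed_psd closed_is_diag)
qed

lemma norm_le_sum_abs_entries: "norm (M::real^'n^'m) \<le> (\<Sum>i\<in>UNIV. \<Sum>j\<in>UNIV. \<bar>M $ i $ j\<bar>)"
proof -
  have "norm M \<le> (\<Sum>i\<in>UNIV. norm (M $ i))" by (simp add: norm_vec_def L2_set_le_sum)
  also have "\<dots> \<le> (\<Sum>i\<in>UNIV. \<Sum>j\<in>UNIV. \<bar>M $ i $ j\<bar>)"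
    by (intro sum_mono norm_le_l1_cart)
  finally show ?thesis .
qed

text \<open>The diagonal part of a split is dominated entrywise by \<open>\<Sigma>\<close>, since both parts have
  nonnegative diagonals.\<close>
lemma bounded_splits: "bounded (splits (S::real^'n^'n))"
proof -
  define B where "B = (\<Sum>i\<in>UNIV. \<Sum>j\<in>UNIV. \<bar>S $ i $ j\<bar>)"
  have "norm s \<le> norm S + 2 * B" if s: "s \<in> splits S" for s
  proof -
    note sp = splitsD[OF s]
    have "\<bar>snd s $ i $ j\<bar> \<le> \<bar>S $ i $ j\<bar>" for i j
    proof (cases "i = j")
      case True
      then show ?thesis using psd_diag_nonneg[OF sp(2), of i] psd_diag_nonneg[OF sp(3), of i] sp(1)
        by auto
    next
      case False
      then show ?thesis using sp(4) by (simp add: is_diag_def)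
    qed
    then have "(\<Sum>i\<in>UNIV. \<Sum>j\<in>UNIV. \<bar>snd s $ i $ j\<bar>) \<le> B"
      unfolding B_def by (intro sum_mono)
    then have "norm (snd s) \<le> B"
      using norm_le_sum_abs_entries[of "snd s"] by linarith
    moreover have "norm (fst s) \<le> norm S + norm (snd s)"
      using sp(1) norm_triangle_ineq4[of S "snd s"] by (simp add: algebra_simps)
    ultimately show ?thesis using norm_Pair_le[of "fst s" "snd s"] by simp
  qed
  then show ?thesis unfolding bounded_iff by blast
qed

lemma compact_splits: "compact (splits (S::real^'n^'n))"
  using bounded_splits closed_splits by (simp only: compact_eq_bounded_closed) blast

lemma continuous_on_lossL: "continuous_on UNIV (\<lambda>s. lossL K (fst s) (snd s))"
  unfolding lossL_def trace_def matrix_matrix_mult_def transpose_def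
  by (intro continuous_intros)

subsection \<open>The loss as a quadratic in the gain\<close>

lemma lossL_expand:
  fixes K Sh St :: "real^'n^'n"
  assumes "transpose Sh = Sh"
  shows "lossL K Sh St = trace Sh - 2 * trace (K ** Sh) + trace (K ** (Sh + St) ** transpose K)"
  using trace_mul_transpose_commute[of Sh K] assms
  by (simp add: lossL_def trace_add trace_sub)

lemma lossL_completing_square:
  fixes K K' Sh St S :: "real^'n^'n"
  assumes "transpose Sh = Sh" "transpose S = S" "Sh + St = S" "K ** S = Sh"
  shows "lossL K' Sh St = lossL K Sh St + trace ((K' - K) ** S ** transpose (K' - K))"
proof -
  have KS: "A ** S ** transpose K = A ** Sh" for A :: "real^'n^'n"
    by (metis assms(1,2,4) matrix_mul_assoc matrix_transpose_mul)
  have "trace (K ** S ** transpose K') = trace (K' ** Sh)"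
    using trace_mul_transpose_commute[of "K ** S" K'] assms(1,4) by simp
  then have "trace ((K' - K) ** S ** transpose (K' - K))
      = trace (K' ** S ** transpose K') - 2 * trace (K' ** Sh) + trace (K ** Sh)"
    by (simp add: matrix_diff_ldistrib matrix_diff_rdistrib transpose_diff trace_add trace_sub KS)
  then show ?thesis
    using lossL_expand[OF assms(1), of K' St] lossL_expand[OF assms(1), of K St] assms(3) KS[of K]
    by simp
qed

lemma lossL_optimal_gain:
  fixes K Sh St S :: "real^'n^'n"
  assumes "transpose Sh = Sh" "transpose S = S" "Sh + St = S" "K ** S = Sh"
  shows "lossL K Sh St = trace Sh - trace (K ** Sh)"
proof -
  have "K ** S ** transpose K = K ** Sh"
    by (metis assms(1,2,4) matrix_mul_assoc matrix_transpose_mul)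
  then show ?thesis using lossL_expand[OF assms(1)] assms(3) by simp
qed

lemma lossL_diff_splits:
  assumes "s \<in> splits S" "s0 \<in> splits S"
  shows "lossL K (fst s) (snd s) - lossL K (fst s0) (snd s0)
    = 2 * trace (K ** (snd s - snd s0)) - trace (snd s - snd s0)"
proof -
  have "fst s = fst s0 - (snd s - snd s0)"
    using splitsD(1)[OF assms(1)] splitsD(1)[OF assms(2)] by (simp add: algebra_simps)
  then show ?thesis
    using lossL_expand[OF psd_symmetric[OF splitsD(2)[OF assms(1)]], of K "snd s"]
      lossL_expand[OF psd_symmetric[OF splitsD(2)[OF assms(2)]], of K "snd s0"]
      splitsD(1)[OF assms(1)] splitsD(1)[OF assms(2)]
    by (simp add: matrix_diff_ldistrib trace_sub)
qed

subsection \<open>Saddle points\<close>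

text \<open>An infimum of continuous functions is upper semicontinuous; the covering argument is
  that of \<open>compact_attains_sup\<close>.\<close>
lemma compact_attains_sup_INF_continuous:
  fixes f :: "'k \<Rightarrow> 'a::topological_space \<Rightarrow> real"
  assumes "compact S" "S \<noteq> {}" and cont: "\<And>k. continuous_on UNIV (f k)"
    and bdd: "\<And>x. x \<in> S \<Longrightarrow> bdd_below (range (\<lambda>k. f k x))"
  shows "\<exists>x\<in>S. \<forall>y\<in>S. (INF k. f k y) \<le> (INF k. f k x)"
proof (rule ccontr)
  define g where "g x = (INF k. f k x)" for x
  assume "\<not> ?thesis"
  then have "\<forall>x\<in>S. \<exists>z\<in>S. g x < g z" by (auto simp: g_def not_le)
  then obtain y where y: "\<And>x. x \<in> S \<Longrightarrow> y x \<in> S \<and> g x < g (y x)" by metis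
  have "\<forall>x\<in>S. \<exists>k. f k x < g (y x)"
    using y cINF_less_iff[OF UNIV_not_empty bdd] by (fastforce simp: g_def)
  then obtain k where k: "\<And>x. x \<in> S \<Longrightarrow> f (k x) x < g (y x)" by metis
  have "S \<subseteq> (\<Union>x\<in>S. {z. f (k x) z < g (y x)})" using k by auto
  moreover have "open {z. f (k x) z < g (y x)}" for x
    using cont by (intro open_Collect_less continuous_on_const)
  ultimately obtain C where C: "C \<subseteq> S" "finite C" "S \<subseteq> (\<Union>x\<in>C. {z. f (k x) z < g (y x)})"
    using \<open>compact S\<close> by (metis (no_types, lifting) compactE_image)
  with \<open>S \<noteq> {}\<close> have "C \<noteq> {}" by blast
  then obtain x0 where "x0 \<in> C" and x0: "\<And>x. x \<in> C \<Longrightarrow> g (y x) \<le> g (y x0)"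
    using Max_in[of "(\<lambda>x. g (y x)) ` C"] Max_ge[of "(\<lambda>x. g (y x)) ` C"] \<open>finite C\<close> by fastforce
  then have "y x0 \<in> S" using y C by blast
  with C obtain x where "x \<in> C" and "f (k x) (y x0) < g (y x)" by blast
  moreover have "g (y x0) \<le> f (k x) (y x0)"
    unfolding g_def using bdd[OF \<open>y x0 \<in> S\<close>] by (rule cINF_lower) simp
  ultimately show False using x0[OF \<open>x \<in> C\<close>] by linarith
qed

lemma saddle_point_minimax:
  fixes f :: "'k \<Rightarrow> 's \<Rightarrow> real"
  assumes "s0 \<in> S"
    and saddle: "\<And>s. s \<in> S \<Longrightarrow> f k0 s \<le> f k0 s0" "\<And>k. f k0 s0 \<le> f k s0"
    and bdd_above: "\<And>k. bdd_above (f k ` S)"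
    and bdd_below: "\<And>s. s \<in> S \<Longrightarrow> bdd_below (range (\<lambda>k. f k s))"
  shows "(SUP s\<in>S. f k0 s) \<le> (SUP s\<in>S. f k s)"
    and "s \<in> S \<Longrightarrow> (INF k. f k s) \<le> (INF k. f k s0)"
    and "(INF k. SUP s\<in>S. f k s) = (SUP s\<in>S. INF k. f k s)"
proof -
  have sup_k0: "(SUP s\<in>S. f k0 s) = f k0 s0"
    using \<open>s0 \<in> S\<close> saddle(1) bdd_above by (intro antisym cSUP_least cSUP_upper) auto
  have inf_s0: "(INF k. f k s0) = f k0 s0"
    using saddle(2) by (intro antisym cINF_lower cINF_greatest bdd_belowI) auto
  have sup_ge: "f k0 s0 \<le> (SUP s\<in>S. f k s)" for k
    using saddle(2)[of k] cSUP_upper[OF \<open>s0 \<in> S\<close> bdd_above] by (rule order_trans)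
  have inf_le: "(INF k. f k s) \<le> f k0 s0" if "s \<in> S" for s
    using cINF_lower[OF bdd_below[OF that], of k0] saddle(1)[OF that] by simp
  show "(SUP s\<in>S. f k0 s) \<le> (SUP s\<in>S. f k s)" using sup_k0 sup_ge by simp
  show "s \<in> S \<Longrightarrow> (INF k. f k s) \<le> (INF k. f k s0)" using inf_le inf_s0 by simp
  have "(INF k. SUP s\<in>S. f k s) \<le> (SUP s\<in>S. f k0 s)"
    using sup_ge by (intro cINF_lower bdd_belowI) auto
  then have "(INF k. SUP s\<in>S. f k s) = f k0 s0"
    using sup_k0 sup_ge by (intro antisym cINF_greatest) auto
  moreover have "(INF k. f k s0) \<le> (SUP s\<in>S. INF k. f k s)"
    using \<open>s0 \<in> S\<close> inf_le by (intro cSUP_upper bdd_aboveI) auto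
  then have "(SUP s\<in>S. INF k. f k s) = f k0 s0"
    using \<open>s0 \<in> S\<close> inf_le inf_s0 by (intro antisym cSUP_least) auto
  ultimately show "(INF k. SUP s\<in>S. f k s) = (SUP s\<in>S. INF k. f k s)" by simp
qed

context
  fixes S :: "real^'n^'n"
  assumes psd_S: "psd S"
begin

lemma optimal_gain_exists:
  assumes "s \<in> splits S"
  shows "\<exists>K. K ** S = fst s"
proof (rule symmetric_right_factor_exists[OF psd_symmetric[OF psd_S]])
  fix v assume "S *v v = 0"
  then show "fst s *v v = 0"
    using psd_sum_null_imp_null(1)[OF splitsD(2,3)[OF assms]] splitsD(1)[OF assms] by simp
qed

lemma optimal_gain_minimises:
  assumes s: "s \<in> splits S" and K: "K ** S = fst s"
  shows "lossL K (fst s) (snd s) \<le> lossL K' (fst s) (snd s)"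
  using lossL_completing_square[OF psd_symmetric[OF splitsD(2)[OF s]] psd_symmetric[OF psd_S]
      splitsD(1)[OF s, symmetric] K, of K']
    trace_quadratic_psd_nonneg[OF psd_S, of "K' - K"]
  by simp

lemma lossL_attains_min:
  assumes "s \<in> splits S"
  shows "\<exists>K. \<forall>K'. lossL K (fst s) (snd s) \<le> lossL K' (fst s) (snd s)"
proof -
  obtain K where "K ** S = fst s" using optimal_gain_exists[OF assms] ..
  then show ?thesis using optimal_gain_minimises[OF assms] by blast
qed

lemma bdd_below_lossL:
  assumes "s \<in> splits S"
  shows "bdd_below (range (\<lambda>K. lossL K (fst s) (snd s)))"
proof -
  obtain K where "\<forall>K'. lossL K (fst s) (snd s) \<le> lossL K' (fst s) (snd s)"
    using lossL_attains_min[OF assms] ..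
  then show ?thesis by (auto intro: bdd_belowI)
qed

lemma INF_lossL_optimal_gain:
  assumes s: "s \<in> splits S" and K: "K ** S = fst s"
  shows "(INF K'. lossL K' (fst s) (snd s)) = lossL K (fst s) (snd s)"
  using optimal_gain_minimises[OF s K] bdd_below_lossL[OF s]
  by (intro antisym cINF_lower cINF_greatest) auto

lemma lossL_attains_sup_splits:
  "\<exists>s\<in>splits S. \<forall>s'\<in>splits S. lossL K (fst s') (snd s') \<le> lossL K (fst s) (snd s)"
  using continuous_attains_sup[OF compact_splits _ continuous_on_subset[OF continuous_on_lossL]]
    split_zero_mem[OF psd_S] by blast

lemma bdd_above_lossL_splits: "bdd_above ((\<lambda>s. lossL K (fst s) (snd s)) ` splits S)"
  using lossL_attains_sup_splits[of K] by (auto intro: bdd_aboveI2)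

lemma INF_lossL_attains_max_splits:
  "\<exists>s0\<in>splits S. \<forall>s\<in>splits S. (INF K. lossL K (fst s) (snd s)) \<le> (INF K. lossL K (fst s0) (snd s0))"
  using compact_attains_sup_INF_continuous[OF compact_splits _ continuous_on_lossL bdd_below_lossL]
    split_zero_mem[OF psd_S] by blast

text \<open>If \<open>K\<^sub>0 S = \<Sigma>h\<^sub>0\<close> and \<open>X S = E\<close> with \<open>E = \<Sigma>t - \<Sigma>t\<^sub>0\<close>, then \<open>K\<^sub>0 - t X\<close> is an optimal gain for
  the split \<open>(1 - t) s\<^sub>0 + t s = (\<Sigma>h\<^sub>0 - t E, \<Sigma>t\<^sub>0 + t E)\<close>.\<close>
lemma INF_lossL_segment:
  assumes s0: "s0 \<in> splits S" and s: "s \<in> splits S" and "0 \<le> t" "t \<le> 1"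
    and K0: "K0 ** S = fst s0" and X: "X ** S = snd s - snd s0"
  defines "st \<equiv> (1 - t) *\<^sub>R s0 + t *\<^sub>R s"
  shows "(INF K. lossL K (fst st) (snd st)) = (INF K. lossL K (fst s0) (snd s0))
    + t * (lossL K0 (fst s) (snd s) - lossL K0 (fst s0) (snd s0)) - t\<^sup>2 * trace (X ** S ** transpose X)"
proof -
  define E where "E = snd s - snd s0"
  have sym0: "transpose (fst s0) = fst s0" using psd_symmetric[OF splitsD(2)[OF s0]] .
  have symE: "transpose E = E"
    using psd_symmetric[OF splitsD(3)[OF s]] psd_symmetric[OF splitsD(3)[OF s0]]
    by (simp add: E_def transpose_diff)
  have XS: "X ** S = E" using X by (simp add: E_def)
  have SXt: "S ** transpose X = E"
    using arg_cong[OF XS, of transpose] symE psd_symmetric[OF psd_S] by (simp add: matrix_transpose_mul)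
  have XE: "X ** E = X ** S ** transpose X" by (simp add: SXt[symmetric] matrix_mul_assoc)
  have st: "st \<in> splits S"
    unfolding st_def using \<open>0 \<le> t\<close> \<open>t \<le> 1\<close> by (intro convexD[OF convex_splits s0 s]) auto
  have "fst s = fst s0 - E"
    using splitsD(1)[OF s0] splitsD(1)[OF s] by (simp add: E_def algebra_simps)
  then have fst_st: "fst st = fst s0 - t *\<^sub>R E" by (simp add: st_def scaleR_diff_left scaleR_diff_right)
  have gain: "(K0 - t *\<^sub>R X) ** S = fst st"
    using K0 XS by (simp add: fst_st matrix_diff_rdistrib scalar_matrix_assoc[symmetric])
  have "trace (X ** fst s0) = trace (X ** S ** transpose K0)"
    using arg_cong[OF K0, of transpose] sym0 psd_symmetric[OF psd_S]
    by (simp add: matrix_transpose_mul matrix_mul_assoc[symmetric])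
  also have "\<dots> = trace (K0 ** E)"
    using trace_mul_transpose_commute[of "X ** S" K0] XS symE by simp
  finally have cross: "trace (X ** fst s0) = trace (K0 ** E)" .
  have "(INF K. lossL K (fst st) (snd st)) = trace (fst st) - trace ((K0 - t *\<^sub>R X) ** fst st)"
    using INF_lossL_optimal_gain[OF st gain] lossL_optimal_gain[OF
        psd_symmetric[OF splitsD(2)[OF st]] psd_symmetric[OF psd_S] splitsD(1)[OF st, symmetric] gain]
    by simp
  also have "\<dots> = trace (fst s0) - trace (K0 ** fst s0) + t * (2 * trace (K0 ** E) - trace E)
      - t\<^sup>2 * trace (X ** S ** transpose X)"
    unfolding fst_st trace_mul_diff_scaleR using cross XE by (simp add: trace_sub trace_scaleR right_diff_distrib)
  finally show ?thesis
    using INF_lossL_optimal_gain[OF s0 K0] lossL_optimal_gain[OF sym0 psd_symmetric[OF psd_S] _ K0]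
      splitsD(1)[OF s0] lossL_diff_splits[OF s s0, of K0]
    by (simp add: E_def)
qed

lemma saddle_point_splits:
  assumes s0: "s0 \<in> splits S" and K0: "K0 ** S = fst s0"
    and max: "\<And>s. s \<in> splits S \<Longrightarrow> (INF K. lossL K (fst s) (snd s)) \<le> (INF K. lossL K (fst s0) (snd s0))"
    and s: "s \<in> splits S"
  shows "lossL K0 (fst s) (snd s) \<le> lossL K0 (fst s0) (snd s0)"
proof -
  define E where "E = snd s - snd s0"
  have "\<exists>X. X ** S = E"
  proof (rule symmetric_right_factor_exists[OF psd_symmetric[OF psd_S]])
    fix v assume "S *v v = 0"
    then have "snd s *v v = 0" "snd s0 *v v = 0"
      using psd_sum_null_imp_null(2)[OF splitsD(2,3)[OF s]] splitsD(1)[OF s]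
        psd_sum_null_imp_null(2)[OF splitsD(2,3)[OF s0]] splitsD(1)[OF s0]
      by auto
    then show "E *v v = 0" by (simp add: E_def matrix_vector_mult_diff_rdistrib)
  qed
  then obtain X where X: "X ** S = E" ..
  have "t * (lossL K0 (fst s) (snd s) - lossL K0 (fst s0) (snd s0)) \<le> t\<^sup>2 * trace (X ** S ** transpose X)"
    if "0 < t" "t \<le> 1" for t
    using INF_lossL_segment[OF s0 s _ \<open>t \<le> 1\<close> K0 X[unfolded E_def]] that
      max[OF convexD[OF convex_splits s0 s, of "1 - t" t]]
    by simp
  then have "lossL K0 (fst s) (snd s) - lossL K0 (fst s0) (snd s0) \<le> 0"
    by (rule nonpos_if_dominated_by_quadratic[OF trace_quadratic_psd_nonneg[OF psd_S]])
  then show ?thesis by simp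
qed

end

theorem proposition12:
  fixes \<Sigma> :: "real^'n^'n"
  assumes "psd \<Sigma>"
  shows "(\<forall>K. \<exists>s\<in>splits \<Sigma>. \<forall>s'\<in>splits \<Sigma>.
            lossL K (fst s') (snd s') \<le> lossL K (fst s) (snd s))
    \<and> (\<forall>s\<in>splits \<Sigma>. \<exists>K. \<forall>K'. lossL K (fst s) (snd s) \<le> lossL K' (fst s) (snd s))
    \<and> (\<exists>K0. \<forall>K. (SUP s\<in>splits \<Sigma>. lossL K0 (fst s) (snd s))
                 \<le> (SUP s\<in>splits \<Sigma>. lossL K (fst s) (snd s)))
    \<and> (\<exists>s0\<in>splits \<Sigma>. \<forall>s\<in>splits \<Sigma>. (INF K. lossL K (fst s) (snd s))
                 \<le> (INF K. lossL K (fst s0) (snd s0)))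
    \<and> (INF K. SUP s\<in>splits \<Sigma>. lossL K (fst s) (snd s))
      = (SUP s\<in>splits \<Sigma>. INF K. lossL K (fst s) (snd s))"
proof -
  obtain s0 where s0: "s0 \<in> splits \<Sigma>"
    and max: "\<And>s. s \<in> splits \<Sigma> \<Longrightarrow> (INF K. lossL K (fst s) (snd s)) \<le> (INF K. lossL K (fst s0) (snd s0))"
    using INF_lossL_attains_max_splits[OF assms] by blast
  obtain K0 where K0: "K0 ** \<Sigma> = fst s0" using optimal_gain_exists[OF assms s0] ..
  note minimax = saddle_point_minimax[where f = "\<lambda>K s. lossL K (fst s) (snd s)", OF s0
      saddle_point_splits[OF assms s0 K0 max] optimal_gain_minimises[OF assms s0 K0]
      bdd_above_lossL_splits[OF assms] bdd_below_lossL[OF assms]]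
  show ?thesis
    using lossL_attains_sup_splits[OF assms] lossL_attains_min[OF assms] minimax s0
    by (intro conjI) blast+
qed

end
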